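(* Let $N\ge 2$ and $1\le\tilde N\le N-1$ be integers. Let $\beta>0$ satisfy $(\beta+1)^{N-\tilde N-1}>\beta^{N-\tilde N+1}$, and suppose that, for all $x\in\mathcal{X}$, $$V_{\tilde N+1}^{\tilde N}(x)\le (\beta+1)\,V_{\tilde N}^{\tilde N}(x)\qquad\text{and}\qquad V_n^{\tilde N}(x)\le (\beta+1)\,l(x,\mu_n(x))\ \text{ for all } n\in\{\tilde N+1,\dots,N\}.$$ Set $\alpha=1-\frac{\beta^{N-\tilde N+1}}{(\beta+1)^{N-\tilde N-1}}$. Then for every $x\in\mathcal{X}$, $$V_N^{\tilde N}\big(f(x,\mu_N(x))\big)-V_N^{\tilde N}(x)\le -\alpha\, l\big(x,\mu_N(x)\big).$$ Hence $V_N^{\tilde N}$, which is positive definite, is a Lyapunov function for the closed-loop system $x(k+1)=f(x(k),\mu_N(x(k)))$ on $\mathcal{X}$.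
   Context: Let $\mathcal{D}\subset\mathbb{R}^n$ and $\mathcal{U}\subset\mathbb{R}^m$ be compact, and let $f:\mathcal{D}\times\mathcal{U}\to\mathcal{D}$ define the discrete-time system $x(k+1)=f(x(k),u(k))$, with $f(0,0)=0$. The stage cost $l:\mathcal{D}\times\mathcal{U}\to[0,\infty)$ is positive definite with $l(0,0)=0$. The set $\mathcal{X}\subseteq\mathcal{D}$ is control invariant: for every $x\in\mathcal{X}$ there is $u\in\mathcal{U}$ with $f(x,u)\in\mathcal{X}$. For $x\in\mathcal{X}$ write $\mathcal{U}(x)=\{u\in\mathcal{U}: f(x,u)\in\mathcal{X}\}$. Fix integers $N$ and $\tilde N$ with $0\le\tilde N\le N-1$. Define value functions on $\mathcal{X}$ recursively (dynamic programming form of the MPC problem with prediction horizon $N$ in which the state constraint $x\in\mathcal{X}$ is imposed only during the first $N-\tilde N$ steps, the last $\tilde N$ steps being unconstrained): - $V_0^{\tilde N}\equiv 0$. - For $n\in\{1,\dots,\tilde N\}$: $V_n^{\tilde N}(x)=\min_{u\in\mathcal{U}}\big[V_{n-1}^{\tilde N}(f(x,u))+l(x,u)\big]$, with $\mu_n(x)$ a minimizer. - For $n\in\{\tilde N+1,\dots,N\}$: $V_n^{\tilde N}(x)=\min_{u\in\mathcal{U}(x)}\big[V_{n-1}^{\tilde N}(f(x,u))+l(x,u)\big]$, with $\mu_n(x)$ a minimizer; in particular $f(x,\mu_n(x))\in\mathcal{X}$. All minima are assumed to be attained. The closed-loop MPC feedback is $\mu_N$. *)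

theory Defs
  imports "HOL-Analysis.Analysis"
begin

definition adm :: "('x \<Rightarrow> 'u \<Rightarrow> 'x) \<Rightarrow> 'x set \<Rightarrow> 'u set \<Rightarrow> 'x \<Rightarrow> 'u set" where
  "adm f X U x = {u \<in> U. f x u \<in> X}"

text \<open>Dynamic-programming value functions V_n^{Nt}: the last Nt steps (n \<le> Nt)
  are unconstrained (minimum over U), the first steps (n > Nt) are minimised over adm.\<close>
fun Vfun :: "('x \<Rightarrow> 'u \<Rightarrow> 'x) \<Rightarrow> ('x \<Rightarrow> 'u \<Rightarrow> real) \<Rightarrow> 'x set \<Rightarrow> 'u set
             \<Rightarrow> nat \<Rightarrow> nat \<Rightarrow> 'x \<Rightarrow> real" where
  "Vfun f l X U Nt 0 x = 0"
| "Vfun f l X U Nt (Suc n) x =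
     (if Suc n \<le> Nt
      then (INF u\<in>U. Vfun f l X U Nt n (f x u) + l x u)
      else (INF u\<in>adm f X U x. Vfun f l X U Nt n (f x u) + l x u))"

end

theory Submission
  imports Defs
begin

text \<open>Write q = \<beta>/(\<beta>+1). Along the optimal constrained trajectory the bound
  V_n(x) \<le> (\<beta>+1) l(x, \<mu>_n(x)) makes the value one step ahead contract:
  V_{n-1}(f(x, \<mu>_n(x))) \<le> q V_n(x). Comparing V_{n+1} with V_n through the same first
  input therefore carries the initial gap V_{Nt+1} - V_Nt \<le> \<beta> V_Nt up the horizon, gaining
  a factor q per step, so V_N - V_{N-1} \<le> \<beta> q^(N-Nt-1) V_{N-1} at the successor state.
  Since V_{N-1}(f(x, \<mu>_N(x))) = V_N(x) - l(x, \<mu>_N(x)) \<le> \<beta> l(x, \<mu>_N(x)), this is the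
  claimed decrease.\<close>

locale mpc_value_bounds =
  fixes f :: "'x \<Rightarrow> 'u \<Rightarrow> 'x" and l :: "'x \<Rightarrow> 'u \<Rightarrow> real" and X :: "'x set"
    and mu :: "nat \<Rightarrow> 'x \<Rightarrow> 'u" and V :: "nat \<Rightarrow> 'x \<Rightarrow> real"
    and Nt N :: nat and \<beta> :: real
  assumes beta_pos: "\<beta> > 0"
    and mu_invariant: "\<And>n x. Nt < n \<Longrightarrow> n \<le> N \<Longrightarrow> x \<in> X \<Longrightarrow> f x (mu n x) \<in> X"
    and bellman_eq: "\<And>n x. Nt < n \<Longrightarrow> n \<le> N \<Longrightarrow> x \<in> X \<Longrightarrow>
        V n x = V (n - 1) (f x (mu n x)) + l x (mu n x)"
    and bellman_le: "\<And>n x. Nt < n \<Longrightarrow> n < N \<Longrightarrow> x \<in> X \<Longrightarrow>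
        V (Suc n) x \<le> V n (f x (mu n x)) + l x (mu n x)"
    and value_base: "\<And>x. x \<in> X \<Longrightarrow> V (Suc Nt) x \<le> (\<beta> + 1) * V Nt x"
    and value_stage: "\<And>n x. Nt < n \<Longrightarrow> n \<le> N \<Longrightarrow> x \<in> X \<Longrightarrow> V n x \<le> (\<beta> + 1) * l x (mu n x)"
begin

lemma successor_value_le:
  assumes "Nt < n" "n \<le> N" "x \<in> X"
  shows "V (n - 1) (f x (mu n x)) \<le> \<beta> / (\<beta> + 1) * V n x"
proof -
  have "V n x / (\<beta> + 1) \<le> l x (mu n x)"
    using value_stage[OF assms] beta_pos by (simp add: field_simps)
  then have "V (n - 1) (f x (mu n x)) \<le> V n x - V n x / (\<beta> + 1)"
    using bellman_eq[OF assms] by simp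
  also have "\<dots> = \<beta> / (\<beta> + 1) * V n x"
    using beta_pos by (simp add: field_simps)
  finally show ?thesis .
qed

lemma value_increment_le:
  assumes "x \<in> X" "Nt + k < N"
  shows "V (Suc (Nt + k)) x - V (Nt + k) x \<le> \<beta> * (\<beta> / (\<beta> + 1)) ^ k * V (Nt + k) x"
  using assms
proof (induction k arbitrary: x)
  case 0
  then show ?case using value_base by (simp add: algebra_simps)
next
  case (Suc k)
  define n where "n = Nt + Suc k"
  define y where "y = f x (mu n x)"
  define q where "q = \<beta> / (\<beta> + 1)"
  have n: "Nt < n" "n < N" "n - 1 = Nt + k" "Suc (Nt + k) = n"
    using Suc.prems by (auto simp: n_def)
  have "y \<in> X" using mu_invariant n Suc.prems(1) by (simp add: y_def)
  then have IH: "V n y - V (n - 1) y \<le> \<beta> * q ^ k * V (n - 1) y"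
    using Suc.IH[of y] Suc.prems(2) n by (simp add: q_def)
  have "\<beta> * q ^ k * V (n - 1) y \<le> \<beta> * q ^ k * (q * V n x)"
    using successor_value_le[of n x] n Suc.prems(1) beta_pos
    by (intro mult_left_mono) (auto simp: q_def y_def)
  moreover have "V (Suc n) x - V n x \<le> V n y - V (n - 1) y"
    using bellman_eq[of n x] bellman_le[of n x] n Suc.prems(1) by (simp add: y_def)
  ultimately show ?case using IH by (simp add: n_def q_def algebra_simps)
qed

theorem value_decrease:
  assumes "Nt < N" "x \<in> X"
  shows "V N (f x (mu N x)) - V N x
           \<le> - (1 - \<beta> ^ (N - Nt + 1) / (\<beta> + 1) ^ (N - Nt - 1)) * l x (mu N x)"
proof -
  define K where "K = N - Nt - 1"
  define y where "y = f x (mu N x)"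
  define q where "q = \<beta> / (\<beta> + 1)"
  have K: "Nt + K = N - 1" "Suc (N - 1) = N" "N - Nt + 1 = K + 2"
    using assms(1) by (auto simp: K_def)
  have "y \<in> X" using mu_invariant assms by (simp add: y_def)
  then have increment: "V N y - V (N - 1) y \<le> \<beta> * q ^ K * V (N - 1) y"
    using value_increment_le[of y K] K assms(1) by (simp add: q_def)
  have "V (N - 1) y \<le> q * V N x"
    using successor_value_le[of N x] assms by (simp add: q_def y_def)
  also have "\<dots> \<le> q * ((\<beta> + 1) * l x (mu N x))"
    using value_stage[of N x] assms beta_pos by (intro mult_left_mono) (auto simp: q_def)
  also have "\<dots> = \<beta> * l x (mu N x)"
    using beta_pos by (simp add: q_def)
  finally have "\<beta> * q ^ K * V (N - 1) y \<le> \<beta> * q ^ K * (\<beta> * l x (mu N x))"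
    using beta_pos by (intro mult_left_mono) (auto simp: q_def)
  then have "V N y - V N x \<le> \<beta> * q ^ K * (\<beta> * l x (mu N x)) - l x (mu N x)"
    using increment bellman_eq[of N x] assms by (simp add: y_def)
  also have "\<beta> * q ^ K * (\<beta> * l x (mu N x)) = \<beta> ^ (K + 2) / (\<beta> + 1) ^ K * l x (mu N x)"
    by (simp add: q_def power_divide power_add power2_eq_square)
  finally show ?thesis unfolding K(3) K_def[symmetric] by (simp add: y_def algebra_simps)
qed

end

lemma Vfun_at_minimizer:
  assumes "Nt < n" "u \<in> adm f X U x"
    and "\<forall>v\<in>adm f X U x. Vfun f l X U Nt (n - 1) (f x u) + l x u
                          \<le> Vfun f l X U Nt (n - 1) (f x v) + l x v"
  shows "Vfun f l X U Nt n x = Vfun f l X U Nt (n - 1) (f x u) + l x u"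
proof -
  obtain m where n: "n = Suc m" using assms(1) by (cases n) auto
  then have "Vfun f l X U Nt n x = (INF v\<in>adm f X U x. Vfun f l X U Nt m (f x v) + l x v)"
    using assms(1) by simp
  also have "\<dots> = Vfun f l X U Nt m (f x u) + l x u"
    by (rule cInf_eq_minimum) (use assms n in auto)
  finally show ?thesis using n by simp
qed

theorem mainTheorem3:
  fixes f :: "real^'n \<Rightarrow> real^'m \<Rightarrow> real^'n"
    and l :: "real^'n \<Rightarrow> real^'m \<Rightarrow> real"
    and D X :: "(real^'n) set" and U :: "(real^'m) set"
    and mu :: "nat \<Rightarrow> real^'n \<Rightarrow> real^'m"
    and N Nt :: nat and \<beta> :: real
  assumes D_compact: "compact D" and U_compact: "compact U"
    and f_maps: "\<And>x u. x \<in> D \<Longrightarrow> u \<in> U \<Longrightarrow> f x u \<in> D"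
    and f_zero: "f 0 0 = 0" and zero_D: "0 \<in> D" and zero_U: "0 \<in> U"
    and l_nonneg: "\<And>x u. x \<in> D \<Longrightarrow> u \<in> U \<Longrightarrow> l x u \<ge> 0"
    and l_zero: "l 0 0 = 0"
    and l_posdef: "\<And>x u. x \<in> D \<Longrightarrow> u \<in> U \<Longrightarrow> (x, u) \<noteq> (0, 0) \<Longrightarrow> l x u > 0"
    and X_sub: "X \<subseteq> D"
    and X_inv: "\<And>x. x \<in> X \<Longrightarrow> \<exists>u\<in>U. f x u \<in> X"
    and mu_unc: "\<And>n x. 1 \<le> n \<Longrightarrow> n \<le> Nt \<Longrightarrow> x \<in> D \<Longrightarrow>
        mu n x \<in> U \<and>
        (\<forall>u\<in>U. Vfun f l X U Nt (n - 1) (f x (mu n x)) + l x (mu n x)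
                 \<le> Vfun f l X U Nt (n - 1) (f x u) + l x u)"
    and mu_con: "\<And>n x. Nt + 1 \<le> n \<Longrightarrow> n \<le> N \<Longrightarrow> x \<in> X \<Longrightarrow>
        mu n x \<in> adm f X U x \<and>
        (\<forall>u\<in>adm f X U x. Vfun f l X U Nt (n - 1) (f x (mu n x)) + l x (mu n x)
                 \<le> Vfun f l X U Nt (n - 1) (f x u) + l x u)"
    and N_ge: "N \<ge> 2" and Nt_ge: "1 \<le> Nt" and Nt_le: "Nt \<le> N - 1"
    and beta_pos: "\<beta> > 0"
    and beta_cond: "(\<beta> + 1) ^ (N - Nt - 1) > \<beta> ^ (N - Nt + 1)"
    and hyp1: "\<And>x. x \<in> X \<Longrightarrow>
        Vfun f l X U Nt (Nt + 1) x \<le> (\<beta> + 1) * Vfun f l X U Nt Nt x"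
    and hyp2: "\<And>x n. x \<in> X \<Longrightarrow> Nt + 1 \<le> n \<Longrightarrow> n \<le> N \<Longrightarrow>
        Vfun f l X U Nt n x \<le> (\<beta> + 1) * l x (mu n x)"
  shows "\<forall>x\<in>X. Vfun f l X U Nt N (f x (mu N x)) - Vfun f l X U Nt N x
           \<le> - (1 - \<beta> ^ (N - Nt + 1) / (\<beta> + 1) ^ (N - Nt - 1)) * l x (mu N x)"
proof -
  have bellman_eq: "Vfun f l X U Nt n x
      = Vfun f l X U Nt (n - 1) (f x (mu n x)) + l x (mu n x)"
    if "Nt < n" "n \<le> N" "x \<in> X" for n x
    using mu_con[of n x] that by (intro Vfun_at_minimizer) auto
  interpret mpc_value_bounds f l X mu "Vfun f l X U Nt" Nt N \<beta>
  proof
    fix n x assume n: "Nt < n" "n < N" and x: "x \<in> X"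
    show "Vfun f l X U Nt (Suc n) x \<le> Vfun f l X U Nt n (f x (mu n x)) + l x (mu n x)"
      using bellman_eq[of "Suc n" x] mu_con[of "Suc n" x] mu_con[of n x] n x by auto
  qed (use beta_pos mu_con bellman_eq hyp1 hyp2 in \<open>auto simp: adm_def\<close>)
  show ?thesis using value_decrease Nt_le N_ge by simp
qed

end
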